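(* Let $\mathfrak{sl}_2\langle\langle\lambda\rangle\rangle=\mathbb C[[\lambda^2]]h+\lambda\mathbb C[[\lambda^2]]e+\lambda\mathbb C[[\lambda^2]]f\subset\mathfrak{sl}_2[[\lambda]]$ (a Lie subalgebra) and $\mathfrak{sl}_2\langle\langle\lambda\rangle\rangle^L=\mathfrak{sl}_2\langle\langle\lambda\rangle\rangle\cap\lambda^L\mathfrak{sl}_2[[\lambda]]$ for $L\ge0$. Then there is a Lie algebra isomorphism $\widehat{\mathfrak{OA}}_1\cong\mathfrak{sl}_2\langle\langle\lambda\rangle\rangle$ which maps $\widehat{\mathfrak{OA}}_1^L$ onto $\mathfrak{sl}_2\langle\langle\lambda\rangle\rangle^L$ for every $L\ge0$, and hence induces isomorphisms $\mathfrak{OA}_{1,L}\cong\mathfrak{sl}_2\langle\langle\lambda\rangle\rangle/\mathfrak{sl}_2\langle\langle\lambda\rangle\rangle^L$ for all $L\ge0$.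
   Context: Work over $\mathbb C$. $\mathfrak{sl}_2$ has basis $e,f,h$ with $[e,f]=h$, $[h,e]=2e$, $[h,f]=-2f$; $\mathfrak{sl}_2[[\lambda]]=\mathbb C[[\lambda]]\otimes\mathfrak{sl}_2$. The Onsager algebra is the Lie subalgebra $\mathfrak{OA}=\{p(t)e+p(t^{-1})f+q(t)h:\ p,q\in\mathbb C[t,t^{-1}],\ q(t^{-1})=-q(t)\}$ of the loop algebra $\mathbb C[t,t^{-1}]\otimes\mathfrak{sl}_2$ (bracket $[px,qy]=pq[x,y]$). $\mathfrak I_{(t-1)^L}=\{p(t)e+p(t^{-1})f+q(t)h\in\mathfrak{OA}: p,q\in(t-1)^L\mathbb C[t,t^{-1}]\}$. For $L\ge1$, $\mathfrak{OA}_{1,L}=\mathfrak{OA}/\mathfrak I_{(t-1)^L}$, $\mathfrak{OA}_{1,0}=0$; for $L\ge K$ there are canonical surjections $\mathfrak{OA}_{1,L}\to\mathfrak{OA}_{1,K}$. $\widehat{\mathfrak{OA}}_1=\varprojlim_L\mathfrak{OA}_{1,L}$, $\psi_{1,L}:\widehat{\mathfrak{OA}}_1\to\mathfrak{OA}_{1,L}$ the canonical map, and $\widehat{\mathfrak{OA}}_1^L=\ker\psi_{1,L}$. *)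

theory Defs
  imports "HOL-Library.Product_Plus" "HOL-Library.Function_Algebras" "HOL-Computational_Algebra.Formal_Power_Series"
begin

definition coset :: "'a::ab_group_add set \<Rightarrow> 'a set \<Rightarrow> 'a \<Rightarrow> 'a set" where
  "coset A I x = {y \<in> A. y - x \<in> I}"

definition quot :: "'a::ab_group_add set \<Rightarrow> 'a set \<Rightarrow> 'a set set" where
  "quot A I = coset A I ` A"

definition qop2 :: "'a::ab_group_add set \<Rightarrow> 'a set \<Rightarrow> ('a \<Rightarrow> 'a \<Rightarrow> 'a) \<Rightarrow> 'a set \<Rightarrow> 'a set \<Rightarrow> 'a set" where
  "qop2 A I f C D = {z \<in> A. \<exists>x\<in>C. \<exists>y\<in>D. z - f x y \<in> I}"

definition qop1 :: "'a::ab_group_add set \<Rightarrow> 'a set \<Rightarrow> ('a \<Rightarrow> 'a) \<Rightarrow> 'a set \<Rightarrow> 'a set" where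
  "qop1 A I g C = {z \<in> A. \<exists>x\<in>C. z - g x \<in> I}"

definition is_lie_iso ::
  "'a set \<Rightarrow> ('a \<Rightarrow> 'a \<Rightarrow> 'a) \<Rightarrow> (complex \<Rightarrow> 'a \<Rightarrow> 'a) \<Rightarrow> ('a \<Rightarrow> 'a \<Rightarrow> 'a) \<Rightarrow>
   'b set \<Rightarrow> ('b \<Rightarrow> 'b \<Rightarrow> 'b) \<Rightarrow> (complex \<Rightarrow> 'b \<Rightarrow> 'b) \<Rightarrow> ('b \<Rightarrow> 'b \<Rightarrow> 'b) \<Rightarrow>
   ('a \<Rightarrow> 'b) \<Rightarrow> bool" where
  "is_lie_iso A add sm br B add' sm' br' \<Phi> \<longleftrightarrow>
     bij_betw \<Phi> A B \<and>
     (\<forall>x\<in>A. \<forall>y\<in>A. \<Phi> (add x y) = add' (\<Phi> x) (\<Phi> y)) \<and>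
     (\<forall>c. \<forall>x\<in>A. \<Phi> (sm c x) = sm' c (\<Phi> x)) \<and>
     (\<forall>x\<in>A. \<forall>y\<in>A. \<Phi> (br x y) = br' (\<Phi> x) (\<Phi> y))"

section \<open>Laurent polynomials C[t,t^-1] as finitely supported functions int => complex\<close>

type_synonym lp = "int \<Rightarrow> complex"

definition LP :: "lp set" where
  "LP = {p. finite {n. p n \<noteq> 0}}"

definition lmul :: "lp \<Rightarrow> lp \<Rightarrow> lp" where
  "lmul p q = (\<lambda>n. \<Sum>k | p k \<noteq> 0. p k * q (n - k))"

definition lscale :: "complex \<Rightarrow> lp \<Rightarrow> lp" where
  "lscale c p = (\<lambda>n. c * p n)"

definition lrefl :: "lp \<Rightarrow> lp" where
  "lrefl p = (\<lambda>n. p (- n))"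

definition lone :: lp where
  "lone = (\<lambda>n. if n = 0 then 1 else 0)"

definition tm1 :: lp where
  "tm1 = (\<lambda>n. if n = 1 then 1 else if n = 0 then -1 else 0)"

definition lpow :: "lp \<Rightarrow> nat \<Rightarrow> lp" where
  "lpow p L = (lmul p ^^ L) lone"

definition tm1_ideal :: "nat \<Rightarrow> lp set" where
  "tm1_ideal L = {p \<in> LP. \<exists>r\<in>LP. p = lmul (lpow tm1 L) r}"

section \<open>Loop algebra C[t,t^-1] \<otimes> sl2: triples (e-coeff, f-coeff, h-coeff)\<close>

type_synonym loop = "lp \<times> lp \<times> lp"

definition loop_br :: "loop \<Rightarrow> loop \<Rightarrow> loop" where
  "loop_br x y = (case x of (a, b, c) \<Rightarrow> case y of (a', b', c') \<Rightarrow>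
     (lscale 2 (lmul c a' - lmul a c'),
      lscale 2 (lmul b c' - lmul c b'),
      lmul a b' - lmul b a'))"

definition loop_scale :: "complex \<Rightarrow> loop \<Rightarrow> loop" where
  "loop_scale c x = (case x of (a, b, d) \<Rightarrow> (lscale c a, lscale c b, lscale c d))"

definition OA :: "loop set" where
  "OA = {(p, lrefl p, q) | p q. p \<in> LP \<and> q \<in> LP \<and> lrefl q = - q}"

definition OA_ideal :: "nat \<Rightarrow> loop set" where
  "OA_ideal L = {(p, lrefl p, q) | p q. (p, lrefl p, q) \<in> OA \<and> p \<in> tm1_ideal L \<and> q \<in> tm1_ideal L}"

text \<open>OA_{1,L} = OA / I_{(t-1)^L}; for L = 0 the ideal is all of OA, so the quotient is 0.\<close>
definition OA_quot :: "nat \<Rightarrow> loop set set" where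
  "OA_quot L = quot OA (OA_ideal L)"

definition OAq_add :: "nat \<Rightarrow> loop set \<Rightarrow> loop set \<Rightarrow> loop set" where
  "OAq_add L = qop2 OA (OA_ideal L) (+)"

definition OAq_scale :: "nat \<Rightarrow> complex \<Rightarrow> loop set \<Rightarrow> loop set" where
  "OAq_scale L c = qop1 OA (OA_ideal L) (loop_scale c)"

definition OAq_br :: "nat \<Rightarrow> loop set \<Rightarrow> loop set \<Rightarrow> loop set" where
  "OAq_br L = qop2 OA (OA_ideal L) loop_br"

definition OA_proj :: "nat \<Rightarrow> loop set \<Rightarrow> loop set" where
  "OA_proj K C = {y \<in> OA. \<exists>x\<in>C. y - x \<in> OA_ideal K}"

definition OAhat :: "(nat \<Rightarrow> loop set) set" where
  "OAhat = {X. (\<forall>L. X L \<in> OA_quot L) \<and> (\<forall>L K. K \<le> L \<longrightarrow> OA_proj K (X L) = X K)}"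

definition OAhat_add :: "(nat \<Rightarrow> loop set) \<Rightarrow> (nat \<Rightarrow> loop set) \<Rightarrow> (nat \<Rightarrow> loop set)" where
  "OAhat_add X Y = (\<lambda>L. OAq_add L (X L) (Y L))"

definition OAhat_scale :: "complex \<Rightarrow> (nat \<Rightarrow> loop set) \<Rightarrow> (nat \<Rightarrow> loop set)" where
  "OAhat_scale c X = (\<lambda>L. OAq_scale L c (X L))"

definition OAhat_br :: "(nat \<Rightarrow> loop set) \<Rightarrow> (nat \<Rightarrow> loop set) \<Rightarrow> (nat \<Rightarrow> loop set)" where
  "OAhat_br X Y = (\<lambda>L. OAq_br L (X L) (Y L))"

definition psi :: "nat \<Rightarrow> (nat \<Rightarrow> loop set) \<Rightarrow> loop set" where
  "psi L X = X L"

definition OAhat_filt :: "nat \<Rightarrow> (nat \<Rightarrow> loop set) set" where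
  "OAhat_filt L = {X \<in> OAhat. psi L X = coset OA (OA_ideal L) 0}"

section \<open>sl2[[lambda]] as triples (e-coeff, f-coeff, h-coeff) of formal power series\<close>

type_synonym sl = "complex fps \<times> complex fps \<times> complex fps"

definition sl_br :: "sl \<Rightarrow> sl \<Rightarrow> sl" where
  "sl_br x y = (case x of (a, b, c) \<Rightarrow> case y of (a', b', c') \<Rightarrow>
     (2 * (c * a' - a * c'), 2 * (b * c' - c * b'), a * b' - b * a'))"

definition sl_scale :: "complex \<Rightarrow> sl \<Rightarrow> sl" where
  "sl_scale c x = (case x of (a, b, d) \<Rightarrow> (fps_const c * a, fps_const c * b, fps_const c * d))"

definition slLL :: "sl set" where
  "slLL = {(a, b, d). \<forall>n. (even n \<longrightarrow> fps_nth a n = 0 \<and> fps_nth b n = 0) \<and>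
                            (odd n \<longrightarrow> fps_nth d n = 0)}"

definition slLL_filt :: "nat \<Rightarrow> sl set" where
  "slLL_filt L = {(a, b, d) \<in> slLL. \<forall>n<L. fps_nth a n = 0 \<and> fps_nth b n = 0 \<and> fps_nth d n = 0}"

end

theory Submission
  imports Defs
begin

unbundle fps_syntax

text \<open>Substituting \<open>t = e\<^sup>\<lambda>\<close> maps Laurent polynomials into \<open>\<complex>[[\<lambda>]]\<close>. Since \<open>e\<^sup>\<lambda> - 1\<close> is \<open>\<lambda>\<close>
  times a unit, the ideal \<open>(t - 1)\<^sup>L\<close> is exactly the preimage of \<open>\<lambda>\<^sup>L \<complex>[[\<lambda>]]\<close>, and the powers
  \<open>(e\<^sup>\<lambda> - 1)\<^sup>k\<close> show that every \<open>L\<close>-jet is attained. The involution \<open>t \<mapsto> t\<^sup>-\<^sup>1\<close> becomes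
  \<open>\<lambda> \<mapsto> -\<lambda>\<close>, so after a constant automorphism of \<open>sl\<^sub>2\<close> the Onsager algebra embeds into
  \<open>sl\<^sub>2\<langle>\<langle>\<lambda>\<rangle>\<rangle>\<close> with dense image, and the ideal of level \<open>L\<close> is the
  preimage of \<open>sl\<^sub>2\<langle>\<langle>\<lambda>\<rangle>\<rangle>\<^sup>L\<close>. As \<open>sl\<^sub>2\<langle>\<langle>\<lambda>\<rangle>\<rangle>\<close> is \<open>\<lambda>\<close>-adically complete and separated, sending a
  compatible family of cosets to the limit of the images of its representatives identifies the
  completion with \<open>sl\<^sub>2\<langle>\<langle>\<lambda>\<rangle>\<rangle>\<close>, and the quotients correspond level by level.\<close>

abbreviation lsupp :: "lp \<Rightarrow> int set" where
  "lsupp p \<equiv> {n. p n \<noteq> 0}"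

section \<open>Laurent polynomials\<close>

lemma LP_iff_finite_lsupp: "p \<in> LP \<longleftrightarrow> finite (lsupp p)"
  by (simp add: LP_def)

lemma lmul_eq_sum_over:
  assumes "finite S" "lsupp p \<subseteq> S"
  shows "lmul p q n = (\<Sum>k\<in>S. p k * q (n - k))"
  unfolding lmul_def by (rule sum.mono_neutral_left) (use assms in auto)

lemma LP_add: "p \<in> LP \<Longrightarrow> q \<in> LP \<Longrightarrow> p + q \<in> LP"
  unfolding LP_iff_finite_lsupp by (rule finite_subset[of _ "lsupp p \<union> lsupp q"]) auto

lemma LP_diff: "p \<in> LP \<Longrightarrow> q \<in> LP \<Longrightarrow> p - q \<in> LP"
  unfolding LP_iff_finite_lsupp by (rule finite_subset[of _ "lsupp p \<union> lsupp q"]) auto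

lemma LP_uminus: "p \<in> LP \<Longrightarrow> - p \<in> LP"
  by (simp add: LP_iff_finite_lsupp)

lemma LP_zero: "0 \<in> LP"
  by (simp add: LP_iff_finite_lsupp)

lemma LP_lscale: "p \<in> LP \<Longrightarrow> lscale c p \<in> LP"
  unfolding LP_iff_finite_lsupp lscale_def by (rule finite_subset[of _ "lsupp p"]) auto

lemma lsupp_lrefl: "lsupp (lrefl p) = uminus ` lsupp p"
  unfolding lrefl_def by (auto simp: image_iff) (metis minus_minus)

lemma LP_lrefl: "p \<in> LP \<Longrightarrow> lrefl p \<in> LP"
  unfolding LP_iff_finite_lsupp lsupp_lrefl by simp

lemma lsupp_lmul_subset: "lsupp (lmul p q) \<subseteq> (\<lambda>(a, b). a + b) ` (lsupp p \<times> lsupp q)"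
proof
  fix n assume "n \<in> lsupp (lmul p q)"
  then obtain k where "p k \<noteq> 0" "q (n - k) \<noteq> 0"
    unfolding lmul_def by (metis (mono_tags, lifting) mem_Collect_eq mult_eq_0_iff sum.neutral)
  then show "n \<in> (\<lambda>(a, b). a + b) ` (lsupp p \<times> lsupp q)"
    by (auto simp: image_iff) (metis add.commute diff_add_cancel)
qed

lemma LP_lmul: "p \<in> LP \<Longrightarrow> q \<in> LP \<Longrightarrow> lmul p q \<in> LP"
  unfolding LP_iff_finite_lsupp using lsupp_lmul_subset by (rule finite_subset) simp

lemma LP_lone: "lone \<in> LP"
  unfolding LP_iff_finite_lsupp lone_def by (rule finite_subset[of _ "{0}"]) auto

lemma LP_tm1: "tm1 \<in> LP"
  unfolding LP_iff_finite_lsupp tm1_def by (rule finite_subset[of _ "{0, 1}"]) auto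

lemma LP_lpow: "p \<in> LP \<Longrightarrow> lpow p L \<in> LP"
  by (induction L) (simp_all add: lpow_def LP_lone LP_lmul)

lemma lpow_0: "lpow p 0 = lone"
  by (simp add: lpow_def)

lemma lpow_Suc: "lpow p (Suc L) = lmul p (lpow p L)"
  by (simp add: lpow_def)

lemma lmul_lone: "lmul lone r = r"
  by (rule ext) (simp add: lmul_eq_sum_over[of "{0}"] lone_def)

lemma lmul_tm1: "lmul tm1 r = (\<lambda>n. r (n - 1) - r n)"
proof (rule ext)
  fix n
  have "lmul tm1 r n = (\<Sum>k\<in>{0, 1}. tm1 k * r (n - k))"
    by (rule lmul_eq_sum_over) (auto simp: tm1_def)
  then show "lmul tm1 r n = r (n - 1) - r n"
    by (simp add: tm1_def)
qed

lemma lmul_tm1_assoc: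
  assumes "p \<in> LP"
  shows "lmul (lmul tm1 p) r = lmul tm1 (lmul p r)"
proof (rule ext)
  fix n
  define S where "S = lsupp p \<union> (\<lambda>k. k + 1) ` lsupp p"
  have S: "finite S" "lsupp p \<subseteq> S"
    using assms by (auto simp: S_def LP_iff_finite_lsupp)
  have S': "finite ((\<lambda>k. k - 1) ` S)" "lsupp p \<subseteq> (\<lambda>k. k - 1) ` S"
  proof -
    show "finite ((\<lambda>k. k - 1) ` S)" using S(1) by simp
    have "k + 1 \<in> S" if "k \<in> lsupp p" for k using that by (simp add: S_def)
    then show "lsupp p \<subseteq> (\<lambda>k. k - 1) ` S" by (force intro: rev_image_eqI)
  qed
  have "lsupp (lmul tm1 p) \<subseteq> S"
  proof
    fix k assume "k \<in> lsupp (lmul tm1 p)"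
    then have "p (k - 1) \<noteq> 0 \<or> p k \<noteq> 0" by (auto simp: lmul_tm1)
    then show "k \<in> S" unfolding S_def by (auto simp: image_iff intro: bexI[of _ "k - 1"])
  qed
  then have "lmul (lmul tm1 p) r n = (\<Sum>k\<in>S. (p (k - 1) - p k) * r (n - k))"
    using lmul_eq_sum_over[OF S(1)] by (simp add: lmul_tm1)
  also have "\<dots> = (\<Sum>k\<in>S. p (k - 1) * r (n - k)) - (\<Sum>k\<in>S. p k * r (n - k))"
    by (simp add: left_diff_distrib sum_subtractf)
  also have "(\<Sum>k\<in>S. p (k - 1) * r (n - k)) = (\<Sum>k\<in>(\<lambda>k. k - 1) ` S. p k * r (n - 1 - k))"
    by (subst sum.reindex) (auto simp: inj_on_def algebra_simps)
  also have "\<dots> = lmul p r (n - 1)"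
    by (rule lmul_eq_sum_over[OF S', symmetric])
  also have "(\<Sum>k\<in>S. p k * r (n - k)) = lmul p r n"
    by (rule lmul_eq_sum_over[OF S, symmetric])
  finally show "lmul (lmul tm1 p) r n = lmul tm1 (lmul p r) n"
    by (simp add: lmul_tm1)
qed

lemma lrefl_lrefl [simp]: "lrefl (lrefl p) = p"
  by (simp add: lrefl_def)

lemma lrefl_add: "lrefl (p + q) = lrefl p + lrefl q"
  by (auto simp: lrefl_def)

lemma lrefl_diff: "lrefl (p - q) = lrefl p - lrefl q"
  by (auto simp: lrefl_def)

lemma lrefl_zero: "lrefl 0 = 0"
  by (auto simp: lrefl_def)

lemma lrefl_lscale: "lrefl (lscale c p) = lscale c (lrefl p)"
  by (auto simp: lrefl_def lscale_def)

lemma lscale_uminus: "lscale c (- p) = - lscale c p"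
  by (auto simp: lscale_def)

lemma lscale_diff: "lscale c (p - q) = lscale c p - lscale c q"
  by (auto simp: lscale_def algebra_simps)

lemma lmul_uminus_left: "lmul (- p) q = - lmul p q"
  unfolding lmul_def by (rule ext) (simp add: sum_negf)

lemma lmul_uminus_right: "lmul p (- q) = - lmul p q"
  unfolding lmul_def by (rule ext) (simp add: sum_negf)

lemma lrefl_lmul: "lrefl (lmul p q) = lmul (lrefl p) (lrefl q)"
proof (rule ext)
  fix n
  have "lmul (lrefl p) (lrefl q) n = (\<Sum>k\<in>uminus ` lsupp p. p (- k) * q (k - n))"
    unfolding lmul_def lsupp_lrefl[symmetric] by (simp add: lrefl_def)
  also have "\<dots> = (\<Sum>k\<in>lsupp p. p k * q (- n - k))"
    by (subst sum.reindex) (auto simp: inj_on_def intro!: sum.cong arg_cong[where f = q])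
  finally show "lrefl (lmul p q) n = lmul (lrefl p) (lrefl q) n"
    by (simp add: lrefl_def lmul_def)
qed

section \<open>Power series divisible by a power of \<open>fps_X\<close>\<close>

lemma fps_X_power_dvd_iff: "fps_X ^ L dvd (F :: 'a::comm_ring_1 fps) \<longleftrightarrow> (\<forall>n<L. F $ n = 0)"
proof
  assume "fps_X ^ L dvd F"
  then obtain G where "F = fps_X ^ L * G" by (elim dvdE)
  then show "\<forall>n<L. F $ n = 0" by (simp add: fps_X_power_mult_nth)
next
  assume "\<forall>n<L. F $ n = 0"
  then have "F = fps_X ^ L * fps_shift L F"
    by (intro fps_ext) (simp add: fps_X_power_mult_nth)
  then show "fps_X ^ L dvd F" by (rule dvdI)
qed

lemma fps_X_power_dvd_mono: "K \<le> L \<Longrightarrow> fps_X ^ L dvd F \<Longrightarrow> fps_X ^ K dvd F"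
  using le_imp_power_dvd dvd_trans by blast

lemma fps_eq_0_if_all_X_power_dvd:
  assumes "\<And>L. fps_X ^ L dvd (F :: 'a::comm_ring_1 fps)"
  shows "F = 0"
proof (rule fps_ext)
  fix n show "F $ n = 0 $ n"
    using assms[of "Suc n"] by (simp only: fps_X_power_dvd_iff) simp
qed

text \<open>The limit is read off coefficientwise: the coefficient in degree \<open>n\<close> is stable from
  index \<open>Suc n\<close> on.\<close>

lemma fps_X_power_dvd_diff_limit:
  fixes f :: "nat \<Rightarrow> 'a::comm_ring_1 fps"
  assumes "\<And>K L. K \<le> L \<Longrightarrow> fps_X ^ K dvd f L - f K"
  shows "fps_X ^ L dvd f L - Abs_fps (\<lambda>n. f (Suc n) $ n)"
proof -
  have "f L $ n = f (Suc n) $ n" if "n < L" for n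
  proof -
    have "fps_X ^ Suc n dvd f L - f (Suc n)" by (rule assms) (use that in simp)
    then show ?thesis by (simp only: fps_X_power_dvd_iff) simp
  qed
  then show ?thesis by (simp add: fps_X_power_dvd_iff)
qed

lemma fps_const_sum: "fps_const (sum f S) = (\<Sum>x\<in>S. fps_const (f x))"
  by (induction S rule: infinite_finite_induct) (simp_all flip: fps_const_add)

section \<open>The substitution \<open>t = e\<^sup>\<lambda>\<close>\<close>

definition exp_subst :: "lp \<Rightarrow> complex fps" where
  "exp_subst p = (\<Sum>k\<in>lsupp p. fps_const (p k) * fps_exp (of_int k))"

lemma exp_subst_eq_sum_over:
  assumes "finite S" "lsupp p \<subseteq> S"
  shows "exp_subst p = (\<Sum>k\<in>S. fps_const (p k) * fps_exp (of_int k))"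
  unfolding exp_subst_def by (rule sum.mono_neutral_left) (use assms in auto)

lemma exp_subst_nth: "exp_subst p $ j = (\<Sum>k\<in>lsupp p. p k * of_int k ^ j) / fact j"
  by (simp add: exp_subst_def fps_sum_nth sum_divide_distrib)

lemma exp_subst_add: "p \<in> LP \<Longrightarrow> q \<in> LP \<Longrightarrow> exp_subst (p + q) = exp_subst p + exp_subst q"
  by (subst (1 2 3) exp_subst_eq_sum_over[of "lsupp p \<union> lsupp q"])
     (auto simp: LP_iff_finite_lsupp sum.distrib distrib_right simp flip: fps_const_add)

lemma exp_subst_diff: "p \<in> LP \<Longrightarrow> q \<in> LP \<Longrightarrow> exp_subst (p - q) = exp_subst p - exp_subst q"
  by (subst (1 2 3) exp_subst_eq_sum_over[of "lsupp p \<union> lsupp q"])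
     (auto simp: LP_iff_finite_lsupp sum_subtractf left_diff_distrib simp flip: fps_const_sub)

lemma exp_subst_uminus: "exp_subst (- p) = - exp_subst p"
  by (simp add: exp_subst_def sum_negf flip: fps_const_neg)

lemma exp_subst_lscale: "p \<in> LP \<Longrightarrow> exp_subst (lscale c p) = fps_const c * exp_subst p"
  by (subst (1 2) exp_subst_eq_sum_over[of "lsupp p"])
     (auto simp: LP_iff_finite_lsupp lscale_def sum_distrib_left mult.assoc simp flip: fps_const_mult)

lemma exp_subst_lone: "exp_subst lone = 1"
  by (subst exp_subst_eq_sum_over[of "{0}"]) (auto simp: lone_def)

lemma exp_subst_tm1: "exp_subst tm1 = fps_exp 1 - 1"
  by (subst exp_subst_eq_sum_over[of "{0, 1}"]) (auto simp: tm1_def simp flip: fps_const_neg)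

lemma exp_subst_lrefl_nth: "exp_subst (lrefl p) $ j = (- 1) ^ j * exp_subst p $ j"
proof -
  have "(\<Sum>k\<in>lsupp (lrefl p). lrefl p k * of_int k ^ j) = (\<Sum>k\<in>uminus ` lsupp p. p (- k) * of_int k ^ j)"
    by (simp only: lsupp_lrefl) (simp add: lrefl_def)
  also have "\<dots> = (\<Sum>k\<in>lsupp p. p k * of_int (- k) ^ j)"
    by (subst sum.reindex) (simp_all add: inj_on_def)
  also have "\<dots> = (\<Sum>k\<in>lsupp p. (- 1) ^ j * (p k * of_int k ^ j))"
    by (rule sum.cong[OF refl]) (metis mult.left_commute of_int_minus power_minus)
  finally show ?thesis
    by (simp add: exp_subst_nth sum_distrib_left)
qed

lemma exp_subst_translate:
  assumes "q \<in> LP"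
  shows "exp_subst (\<lambda>n. q (n - j)) = fps_exp (of_int j) * exp_subst q"
proof -
  have "lsupp (\<lambda>n. q (n - j)) = (\<lambda>k. k + j) ` lsupp q"
    by (auto simp: image_iff) (metis diff_add_cancel)
  then have "exp_subst (\<lambda>n. q (n - j)) = (\<Sum>k\<in>lsupp q. fps_const (q k) * fps_exp (of_int (k + j)))"
    by (simp add: exp_subst_def sum.reindex inj_on_def)
  also have "\<dots> = fps_exp (of_int j) * exp_subst q"
    by (simp add: exp_subst_def fps_exp_add_mult sum_distrib_left mult_ac)
  finally show ?thesis .
qed

lemma exp_subst_lmul:
  assumes "p \<in> LP" "q \<in> LP"
  shows "exp_subst (lmul p q) = exp_subst p * exp_subst q"
proof -
  define S where "S = (\<lambda>(a, b). a + b) ` (lsupp p \<times> lsupp q)"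
  have S: "finite S" "lsupp (lmul p q) \<subseteq> S"
    using assms lsupp_lmul_subset by (auto simp: S_def LP_iff_finite_lsupp)
  have S_translate: "lsupp (\<lambda>n. q (n - j)) \<subseteq> S" if "j \<in> lsupp p" for j
    using that by (force simp: S_def)
  have "exp_subst (lmul p q)
      = (\<Sum>n\<in>S. \<Sum>j\<in>lsupp p. fps_const (p j) * (fps_const (q (n - j)) * fps_exp (of_int n)))"
    by (subst exp_subst_eq_sum_over[OF S])
       (simp add: lmul_def fps_const_sum sum_distrib_right mult.assoc flip: fps_const_mult)
  also have "\<dots> = (\<Sum>j\<in>lsupp p. fps_const (p j) * exp_subst (\<lambda>n. q (n - j)))"
    by (subst sum.swap) (simp add: exp_subst_eq_sum_over[OF S(1) S_translate] sum_distrib_left)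
  also have "\<dots> = exp_subst p * exp_subst q"
    by (simp add: exp_subst_translate[OF assms(2)] exp_subst_def sum_distrib_right mult_ac)
  finally show ?thesis .
qed

lemma exp_subst_lpow_tm1: "exp_subst (lpow tm1 L) = (fps_exp 1 - 1) ^ L"
  by (induction L) (simp_all add: lpow_0 lpow_Suc exp_subst_lone exp_subst_lmul LP_tm1 LP_lpow exp_subst_tm1)

section \<open>The ideal generated by \<open>(t - 1)\<^sup>L\<close>\<close>

text \<open>Under \<open>t = e\<^sup>\<lambda>\<close> the polynomial \<open>t - 1\<close> becomes \<open>fps_X\<close> times a unit.\<close>

lemma fps_X_power_dvd_exp_minus_1_power_mult_iff:
  "fps_X ^ (k + L) dvd (fps_exp (1 :: 'a::field_char_0) - 1) ^ k * G \<longleftrightarrow> fps_X ^ L dvd G"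
proof -
  define U :: "'a fps" where "U = fps_shift 1 (fps_exp 1 - 1)"
  have "fps_exp 1 - 1 = fps_X * U"
    unfolding U_def by (rule fps_ext) simp
  moreover have "is_unit (U ^ k)"
    by (simp add: U_def)
  ultimately show ?thesis
    by (simp add: power_add power_mult_distrib mult.assoc dvd_mult_unit_iff')
qed

lemma lmul_tm1_neg_partial_sums:
  assumes "p \<in> LP"
  shows "lmul tm1 (\<lambda>n. - (\<Sum>k | p k \<noteq> 0 \<and> k \<le> n. p k)) = p"
proof (rule ext)
  fix n
  have fin: "finite {k. p k \<noteq> 0 \<and> k \<le> n - 1}"
    using assms by (simp add: LP_iff_finite_lsupp)
  have "{k. p k \<noteq> 0 \<and> k \<le> n} = (if p n = 0 then {} else {n}) \<union> {k. p k \<noteq> 0 \<and> k \<le> n - 1}"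
    by (auto simp: order_le_less)
  then show "lmul tm1 (\<lambda>n. - (\<Sum>k | p k \<noteq> 0 \<and> k \<le> n. p k)) n = p n"
    using fin by (simp add: lmul_tm1 sum.union_disjoint)
qed

lemma LP_partial_sums:
  assumes "p \<in> LP" "(\<Sum>k\<in>lsupp p. p k) = 0"
  shows "(\<lambda>n. \<Sum>k | p k \<noteq> 0 \<and> k \<le> n. p k) \<in> LP"
proof -
  define m where "m = Min (insert 0 (lsupp p))"
  define M where "M = Max (insert 0 (lsupp p))"
  have fin: "finite (lsupp p)"
    using assms(1) by (simp add: LP_iff_finite_lsupp)
  have bounds: "m \<le> k \<and> k \<le> M" if "p k \<noteq> 0" for k
    using fin that by (simp add: m_def M_def)
  have "(\<Sum>k | p k \<noteq> 0 \<and> k \<le> n. p k) = 0" if "n \<notin> {m..M}" for n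
  proof (cases "n < m")
    case True
    then have "{k. p k \<noteq> 0 \<and> k \<le> n} = {}"
      using bounds by fastforce
    then show ?thesis by (simp only: sum.empty)
  next
    case False
    then have "{k. p k \<noteq> 0 \<and> k \<le> n} = lsupp p"
      using bounds that by fastforce
    then show ?thesis using assms(2) by (simp only:)
  qed
  then have "lsupp (\<lambda>n. \<Sum>k | p k \<noteq> 0 \<and> k \<le> n. p k) \<subseteq> {m..M}"
    by blast
  then show ?thesis
    unfolding LP_iff_finite_lsupp by (rule finite_subset) simp
qed

lemma lmul_tm1_surj_if_exp_subst_nth_0:
  assumes "p \<in> LP" "exp_subst p $ 0 = 0"
  obtains r where "r \<in> LP" "lmul tm1 r = p"
proof
  show "- (\<lambda>n. \<Sum>k | p k \<noteq> 0 \<and> k \<le> n. p k) \<in> LP"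
    using assms by (intro LP_uminus LP_partial_sums) (simp_all add: exp_subst_nth)
  show "lmul tm1 (- (\<lambda>n. \<Sum>k | p k \<noteq> 0 \<and> k \<le> n. p k)) = p"
    using lmul_tm1_neg_partial_sums[OF assms(1)] by (simp add: fun_Compl_def)
qed

lemma tm1_ideal_iff_fps_X_power_dvd:
  assumes "p \<in> LP"
  shows "p \<in> tm1_ideal L \<longleftrightarrow> fps_X ^ L dvd exp_subst p"
proof
  assume "p \<in> tm1_ideal L"
  then obtain r where "r \<in> LP" "p = lmul (lpow tm1 L) r"
    unfolding tm1_ideal_def by blast
  then have "exp_subst p = (fps_exp 1 - 1) ^ L * exp_subst r"
    by (simp add: exp_subst_lmul LP_lpow LP_tm1 exp_subst_lpow_tm1)
  then show "fps_X ^ L dvd exp_subst p"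
    using fps_X_power_dvd_exp_minus_1_power_mult_iff[of L 0] by simp
next
  show "fps_X ^ L dvd exp_subst p \<Longrightarrow> p \<in> tm1_ideal L"
    using assms
  proof (induction L arbitrary: p)
    case 0
    then show ?case
      unfolding tm1_ideal_def by (auto simp: lpow_0 lmul_lone)
  next
    case (Suc L)
    have "exp_subst p $ 0 = 0"
      using Suc.prems(1) unfolding fps_X_power_dvd_iff by simp
    then obtain r where r: "r \<in> LP" "lmul tm1 r = p"
      using lmul_tm1_surj_if_exp_subst_nth_0 Suc.prems(2) by blast
    then have "exp_subst p = (fps_exp 1 - 1) ^ 1 * exp_subst r"
      by (auto simp: exp_subst_lmul LP_tm1 exp_subst_tm1)
    then have "fps_X ^ (1 + L) dvd (fps_exp 1 - 1) ^ 1 * exp_subst r"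
      using Suc.prems(1) by simp
    then have "fps_X ^ L dvd exp_subst r"
      by (simp only: fps_X_power_dvd_exp_minus_1_power_mult_iff)
    then obtain r' where r': "r' \<in> LP" "r = lmul (lpow tm1 L) r'"
      using Suc.IH r(1) unfolding tm1_ideal_def by blast
    then have "p = lmul (lpow tm1 (Suc L)) r'"
      using r by (simp add: lpow_Suc lmul_tm1_assoc LP_lpow LP_tm1)
    then show ?case
      unfolding tm1_ideal_def using Suc.prems(2) r'(1) by blast
  qed
qed

lemma fps_exp_minus_1_power_nth:
  assumes "j \<le> L"
  shows "((fps_exp (1 :: 'a::field_char_0) - 1) ^ L) $ j = (if j = L then 1 else 0)"
proof -
  have "(fps_exp (1 :: 'a) - 1) $ 0 = 0" by simp
  from startsby_zero_power_prefix[OF this, of L] startsby_zero_power_nth_same[OF this, of L]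
  show ?thesis using assms by (cases "j = L") simp_all
qed

text \<open>Every \<open>L\<close>-jet is attained, since \<open>(e\<^sup>\<lambda> - 1)\<^sup>k\<close> has order exactly \<open>k\<close>.\<close>

lemma exp_subst_jet_surj: "\<exists>p\<in>LP. fps_X ^ L dvd exp_subst p - F"
proof (induction L)
  case 0
  then show ?case using LP_zero by auto
next
  case (Suc L)
  then obtain p where p: "p \<in> LP" "fps_X ^ L dvd exp_subst p - F" by blast
  define c where "c = F $ L - exp_subst p $ L"
  define p' where "p' = p + lscale c (lpow tm1 L)"
  have "p' \<in> LP"
    unfolding p'_def by (intro LP_add LP_lscale LP_lpow LP_tm1 p(1))
  moreover have "exp_subst p' = exp_subst p + fps_const c * (fps_exp 1 - 1) ^ L"
    unfolding p'_def by (simp add: exp_subst_add p(1) LP_lscale LP_lpow LP_tm1 exp_subst_lscale exp_subst_lpow_tm1)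
  ultimately have "\<forall>j<Suc L. (exp_subst p' - F) $ j = 0"
    using p(2) unfolding fps_X_power_dvd_iff by (auto simp: c_def less_Suc_eq fps_exp_minus_1_power_nth)
  then show ?case
    using \<open>p' \<in> LP\<close> unfolding fps_X_power_dvd_iff by blast
qed

section \<open>The filtered Lie algebra \<open>sl\<^sub>2\<langle>\<langle>\<lambda>\<rangle>\<rangle>\<close>\<close>

text \<open>\<open>fps_parity True F\<close>: \<open>F\<close> is even; \<open>fps_parity False F\<close>: \<open>F\<close> is odd.\<close>

definition fps_parity :: "bool \<Rightarrow> 'a::comm_ring_1 fps \<Rightarrow> bool" where
  "fps_parity e F \<longleftrightarrow> (\<forall>n. F $ n \<noteq> 0 \<longrightarrow> (even n \<longleftrightarrow> e))"

lemma fps_parity_zero: "fps_parity e 0"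
  by (simp add: fps_parity_def)

lemma fps_parity_add: "fps_parity e F \<Longrightarrow> fps_parity e G \<Longrightarrow> fps_parity e (F + G)"
  unfolding fps_parity_def by (metis add.right_neutral fps_add_nth)

lemma fps_parity_diff: "fps_parity e F \<Longrightarrow> fps_parity e G \<Longrightarrow> fps_parity e (F - G)"
  unfolding fps_parity_def by (metis diff_zero diff_self fps_sub_nth)

lemma fps_parity_const_mult: "fps_parity e F \<Longrightarrow> fps_parity e (fps_const c * F)"
  unfolding fps_parity_def by (metis fps_mult_left_const_nth mult_not_zero)

lemma fps_parity_numeral_mult: "fps_parity e F \<Longrightarrow> fps_parity e (numeral k * F)"
  by (metis fps_parity_const_mult numeral_fps_const)

lemma fps_parity_mult:
  assumes "fps_parity e F" "fps_parity e' G"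
  shows "fps_parity (e = e') (F * G)"
  unfolding fps_parity_def
proof (intro allI impI)
  fix n assume "(F * G) $ n \<noteq> 0"
  then obtain i where "i \<in> {0..n}" "F $ i * G $ (n - i) \<noteq> 0"
    unfolding fps_mult_nth by (meson sum.neutral)
  then have i: "i \<le> n" "F $ i \<noteq> 0" "G $ (n - i) \<noteq> 0"
    by auto
  then have "even i \<longleftrightarrow> e" "even (n - i) \<longleftrightarrow> e'"
    using assms unfolding fps_parity_def by auto
  moreover have "even n \<longleftrightarrow> (even i \<longleftrightarrow> even (n - i))"
    using i(1) by auto
  ultimately show "even n \<longleftrightarrow> (e = e')" by blast
qed

lemma slLL_iff_parity: "(a, b, d) \<in> slLL \<longleftrightarrow> fps_parity False a \<and> fps_parity False b \<and> fps_parity True d"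
  unfolding slLL_def fps_parity_def by auto

lemma slLL_iff_nth:
  "u \<in> slLL \<longleftrightarrow> (\<forall>n. (even n \<longrightarrow> fst u $ n = 0 \<and> fst (snd u) $ n = 0) \<and> (odd n \<longrightarrow> snd (snd u) $ n = 0))"
  by (cases u) (simp add: slLL_def)

lemma slLL_zero: "0 \<in> slLL"
  by (simp add: zero_prod_def slLL_iff_parity fps_parity_zero)

lemma slLL_add: "u \<in> slLL \<Longrightarrow> v \<in> slLL \<Longrightarrow> u + v \<in> slLL"
  by (cases u; cases v) (simp add: slLL_iff_parity fps_parity_add)

lemma slLL_diff: "u \<in> slLL \<Longrightarrow> v \<in> slLL \<Longrightarrow> u - v \<in> slLL"
  by (cases u; cases v) (simp add: slLL_iff_parity fps_parity_diff)

lemma slLL_scale: "u \<in> slLL \<Longrightarrow> sl_scale c u \<in> slLL"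
  by (cases u) (simp add: slLL_iff_parity sl_scale_def fps_parity_const_mult)

lemma slLL_br:
  assumes "u \<in> slLL" "v \<in> slLL"
  shows "sl_br u v \<in> slLL"
proof -
  obtain a b c a' b' c' where uv: "u = (a, b, c)" "v = (a', b', c')"
    by (cases u, cases v) auto
  have "fps_parity False a" "fps_parity False b" "fps_parity True c"
    "fps_parity False a'" "fps_parity False b'" "fps_parity True c'"
    using assms unfolding uv slLL_iff_parity by auto
  then show ?thesis
    unfolding uv sl_br_def slLL_iff_parity prod.case
    using fps_parity_mult by (fastforce intro: fps_parity_numeral_mult fps_parity_diff)
qed

definition sl_lambda_pow :: "nat \<Rightarrow> sl set" where
  "sl_lambda_pow L = {(a, b, d). fps_X ^ L dvd a \<and> fps_X ^ L dvd b \<and> fps_X ^ L dvd d}"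

lemma sl_lambda_pow_iff:
  "u \<in> sl_lambda_pow L \<longleftrightarrow> fps_X ^ L dvd fst u \<and> fps_X ^ L dvd fst (snd u) \<and> fps_X ^ L dvd snd (snd u)"
  by (cases u) (simp add: sl_lambda_pow_def)

lemma sl_lambda_pow_iff_nth:
  "u \<in> sl_lambda_pow L \<longleftrightarrow> (\<forall>n<L. fst u $ n = 0 \<and> fst (snd u) $ n = 0 \<and> snd (snd u) $ n = 0)"
  by (cases u) (auto simp: sl_lambda_pow_def fps_X_power_dvd_iff)

lemma slLL_filt_eq: "slLL_filt L = slLL \<inter> sl_lambda_pow L"
  unfolding slLL_filt_def sl_lambda_pow_def fps_X_power_dvd_iff by auto

lemma sl_lambda_pow_zero: "0 \<in> sl_lambda_pow L"
  by (simp add: zero_prod_def sl_lambda_pow_def)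

lemma sl_lambda_pow_add: "u \<in> sl_lambda_pow L \<Longrightarrow> v \<in> sl_lambda_pow L \<Longrightarrow> u + v \<in> sl_lambda_pow L"
  by (cases u; cases v) (simp add: sl_lambda_pow_def)

lemma sl_lambda_pow_diff: "u \<in> sl_lambda_pow L \<Longrightarrow> v \<in> sl_lambda_pow L \<Longrightarrow> u - v \<in> sl_lambda_pow L"
  by (cases u; cases v) (simp add: sl_lambda_pow_def)

lemma sl_lambda_pow_scale: "u \<in> sl_lambda_pow L \<Longrightarrow> sl_scale c u \<in> sl_lambda_pow L"
  by (cases u) (simp add: sl_lambda_pow_def sl_scale_def)

lemma sl_scale_diff: "sl_scale c (u - v) = sl_scale c u - sl_scale c v"
  by (cases u; cases v) (simp add: sl_scale_def algebra_simps)

lemma sl_lambda_pow_br_left: "u \<in> sl_lambda_pow L \<Longrightarrow> sl_br u v \<in> sl_lambda_pow L"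
  by (cases u; cases v) (simp add: sl_lambda_pow_def sl_br_def)

lemma sl_lambda_pow_br_right: "v \<in> sl_lambda_pow L \<Longrightarrow> sl_br u v \<in> sl_lambda_pow L"
  by (cases u; cases v) (simp add: sl_lambda_pow_def sl_br_def)

lemma sl_lambda_pow_antimono: "K \<le> L \<Longrightarrow> sl_lambda_pow L \<subseteq> sl_lambda_pow K"
  unfolding sl_lambda_pow_def using fps_X_power_dvd_mono by blast

lemma sl_br_congruent:
  assumes "u - u' \<in> sl_lambda_pow L" "v - v' \<in> sl_lambda_pow L"
  shows "sl_br u v - sl_br u' v' \<in> sl_lambda_pow L"
proof -
  have "sl_br u v - sl_br u' v' = sl_br (u - u') v + sl_br u' (v - v')"
    by (cases u; cases v; cases u'; cases v') (simp add: sl_br_def algebra_simps)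
  then show ?thesis
    using assms by (simp add: sl_lambda_pow_add sl_lambda_pow_br_left sl_lambda_pow_br_right)
qed

lemma sl_eq_0_if_all_sl_lambda_pow: "(\<And>L. u \<in> sl_lambda_pow L) \<Longrightarrow> u = 0"
  by (cases u) (auto simp: sl_lambda_pow_def zero_prod_def intro: fps_eq_0_if_all_X_power_dvd)

lemma sl_lambda_pow_limit:
  assumes "\<And>K L. K \<le> L \<Longrightarrow> u L - u K \<in> sl_lambda_pow K"
  obtains s where "\<And>L. u L - s \<in> sl_lambda_pow L"
proof
  let ?lim = "\<lambda>f :: nat \<Rightarrow> complex fps. Abs_fps (\<lambda>n. f (Suc n) $ n)"
  fix L
  have "K \<le> L \<Longrightarrow> fps_X ^ K dvd fst (u L) - fst (u K)"
       "K \<le> L \<Longrightarrow> fps_X ^ K dvd fst (snd (u L)) - fst (snd (u K))"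
       "K \<le> L \<Longrightarrow> fps_X ^ K dvd snd (snd (u L)) - snd (snd (u K))" for K L
    using assms[of K L] by (simp_all add: sl_lambda_pow_iff)
  then show "u L - (?lim (fst \<circ> u), ?lim (fst \<circ> snd \<circ> u), ?lim (snd \<circ> snd \<circ> u)) \<in> sl_lambda_pow L"
    using fps_X_power_dvd_diff_limit[of "fst \<circ> u"] fps_X_power_dvd_diff_limit[of "fst \<circ> snd \<circ> u"]
      fps_X_power_dvd_diff_limit[of "snd \<circ> snd \<circ> u"]
    by (simp add: sl_lambda_pow_iff)
qed

lemma slLL_closed:
  assumes "\<And>L. \<exists>v\<in>slLL. v - u \<in> sl_lambda_pow L"
  shows "u \<in> slLL"
proof -
  have "fst u $ n = 0 \<and> fst (snd u) $ n = 0" if "even n" for n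
    using assms[of "Suc n"] that by (auto simp: sl_lambda_pow_iff_nth slLL_iff_nth)
  moreover have "snd (snd u) $ n = 0" if "odd n" for n
    using assms[of "Suc n"] that by (auto simp: sl_lambda_pow_iff_nth slLL_iff_nth)
  ultimately show ?thesis
    by (simp add: slLL_iff_nth)
qed

section \<open>Embedding the Onsager algebra into \<open>sl\<^sub>2[[\<lambda>]]\<close>\<close>

definition loop_subst :: "loop \<Rightarrow> sl" where
  "loop_subst x = (case x of (a, b, c) \<Rightarrow> (exp_subst a, exp_subst b, exp_subst c))"

text \<open>\<open>sl_twist\<close> is the automorphism \<open>e \<mapsto> (h - e + f)/2\<close>, \<open>f \<mapsto> (h + e - f)/2\<close>, \<open>h \<mapsto> e + f\<close>
  of \<open>sl\<^sub>2\<close>. It conjugates the Chevalley involution \<open>e \<leftrightarrow> f\<close>, \<open>h \<mapsto> -h\<close> (which together with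
  \<open>t \<mapsto> t\<^sup>-\<^sup>1\<close> cuts out the Onsager algebra) into \<open>e \<mapsto> -e\<close>, \<open>f \<mapsto> -f\<close>, \<open>h \<mapsto> h\<close> (which together
  with \<open>\<lambda> \<mapsto> -\<lambda>\<close> cuts out \<open>sl\<^sub>2\<langle>\<langle>\<lambda>\<rangle>\<rangle>\<close>).\<close>

definition sl_twist :: "sl \<Rightarrow> sl" where
  "sl_twist u = (case u of (a, b, d) \<Rightarrow>
     (d + fps_const (1/2) * (b - a), d + fps_const (1/2) * (a - b), fps_const (1/2) * (a + b)))"

definition onsager_embed :: "loop \<Rightarrow> sl" where
  "onsager_embed x = sl_twist (loop_subst x)"

lemma sl_twist_add: "sl_twist (u + v) = sl_twist u + sl_twist v"
  by (cases u; cases v) (simp add: sl_twist_def algebra_simps)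

lemma sl_twist_diff: "sl_twist (u - v) = sl_twist u - sl_twist v"
  by (cases u; cases v) (simp add: sl_twist_def algebra_simps)

lemma sl_twist_scale: "sl_twist (sl_scale c u) = sl_scale c (sl_twist u)"
  by (cases u) (simp add: sl_twist_def sl_scale_def algebra_simps)

lemma sl_twist_br: "sl_twist (sl_br u v) = sl_br (sl_twist u) (sl_twist v)"
proof -
  obtain a b d a' b' d' where uv: "u = (a, b, d)" "v = (a', b', d')"
    by (cases u, cases v) auto
  define h :: "complex fps" where "h = fps_const (1/2)"
  have h: "2 * h = 1"
    by (simp add: h_def numeral_fps_const flip: fps_const_1_eq_1)
  show ?thesis
    unfolding uv sl_twist_def sl_br_def h_def[symmetric] prod.case prod.inject
    by (intro conjI) (use h in algebra | simp add: algebra_simps)+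
qed

lemma sl_twist_mem_sl_lambda_pow_iff: "sl_twist u \<in> sl_lambda_pow L \<longleftrightarrow> u \<in> sl_lambda_pow L"
proof -
  have linear_iff: "(d + 1/2 * (b - a) = 0 \<and> d + 1/2 * (a - b) = 0 \<and> 1/2 * (a + b) = 0) \<longleftrightarrow>
      (a = 0 \<and> b = 0 \<and> d = 0)" for a b d :: complex
    by (auto simp: field_simps)
  show ?thesis
    by (cases u) (simp only: sl_twist_def sl_lambda_pow_iff_nth prod.case fst_conv snd_conv
        fps_add_nth fps_sub_nth fps_mult_left_const_nth linear_iff)
qed

lemma loop_subst_add:
  "x \<in> LP \<times> LP \<times> LP \<Longrightarrow> y \<in> LP \<times> LP \<times> LP \<Longrightarrow> loop_subst (x + y) = loop_subst x + loop_subst y"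
  by (auto simp: loop_subst_def exp_subst_add)

lemma loop_subst_diff:
  "x \<in> LP \<times> LP \<times> LP \<Longrightarrow> y \<in> LP \<times> LP \<times> LP \<Longrightarrow> loop_subst (x - y) = loop_subst x - loop_subst y"
  by (auto simp: loop_subst_def exp_subst_diff)

lemma loop_subst_scale:
  "x \<in> LP \<times> LP \<times> LP \<Longrightarrow> loop_subst (loop_scale c x) = sl_scale c (loop_subst x)"
  by (auto simp: loop_subst_def loop_scale_def sl_scale_def exp_subst_lscale)

lemma loop_subst_br:
  "x \<in> LP \<times> LP \<times> LP \<Longrightarrow> y \<in> LP \<times> LP \<times> LP \<Longrightarrow> loop_subst (loop_br x y) = sl_br (loop_subst x) (loop_subst y)"
  by (auto simp: loop_subst_def loop_br_def sl_br_def exp_subst_lscale exp_subst_diff exp_subst_lmul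
      LP_lmul LP_diff numeral_fps_const)

lemma OAE:
  assumes "x \<in> OA"
  obtains p q where "x = (p, lrefl p, q)" "p \<in> LP" "q \<in> LP" "lrefl q = - q"
  using assms unfolding OA_def by blast

lemma OA_in_LP3: "x \<in> OA \<Longrightarrow> x \<in> LP \<times> LP \<times> LP"
  by (auto simp: LP_lrefl elim: OAE)

lemma OA_zero: "0 \<in> OA"
  unfolding OA_def by (auto simp: zero_prod_def lrefl_zero LP_zero intro!: exI[of _ 0])

lemma OA_add: "x \<in> OA \<Longrightarrow> y \<in> OA \<Longrightarrow> x + y \<in> OA"
  unfolding OA_def by (auto simp: lrefl_add LP_add)

lemma OA_diff: "x \<in> OA \<Longrightarrow> y \<in> OA \<Longrightarrow> x - y \<in> OA"
  unfolding OA_def by (auto simp: lrefl_diff LP_diff)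

lemma OA_scale: "x \<in> OA \<Longrightarrow> loop_scale c x \<in> OA"
  unfolding OA_def by (auto simp: loop_scale_def lrefl_lscale LP_lscale lscale_uminus)

lemma OA_br: "x \<in> OA \<Longrightarrow> y \<in> OA \<Longrightarrow> loop_br x y \<in> OA"
  unfolding OA_def
  by (clarsimp simp: loop_br_def lrefl_lscale lrefl_diff lrefl_lmul lmul_uminus_left lmul_uminus_right
      LP_lscale LP_diff LP_lmul LP_lrefl lscale_diff lscale_uminus)

lemma onsager_embed_zero: "onsager_embed 0 = 0"
  by (simp add: onsager_embed_def loop_subst_def sl_twist_def zero_prod_def exp_subst_def)

lemma onsager_embed_add: "x \<in> OA \<Longrightarrow> y \<in> OA \<Longrightarrow> onsager_embed (x + y) = onsager_embed x + onsager_embed y"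
  by (simp add: onsager_embed_def loop_subst_add OA_in_LP3 sl_twist_add del: mem_Times_iff)

lemma onsager_embed_diff: "x \<in> OA \<Longrightarrow> y \<in> OA \<Longrightarrow> onsager_embed (x - y) = onsager_embed x - onsager_embed y"
  by (simp add: onsager_embed_def loop_subst_diff OA_in_LP3 sl_twist_diff del: mem_Times_iff)

lemma onsager_embed_scale: "x \<in> OA \<Longrightarrow> onsager_embed (loop_scale c x) = sl_scale c (onsager_embed x)"
  by (simp add: onsager_embed_def loop_subst_scale OA_in_LP3 sl_twist_scale del: mem_Times_iff)

lemma onsager_embed_br:
  "x \<in> OA \<Longrightarrow> y \<in> OA \<Longrightarrow> onsager_embed (loop_br x y) = sl_br (onsager_embed x) (onsager_embed y)"
  by (simp add: onsager_embed_def loop_subst_br OA_in_LP3 sl_twist_br del: mem_Times_iff)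

lemma onsager_embed_nth:
  "fst (onsager_embed (p, lrefl p, q)) $ n = exp_subst q $ n + ((- 1) ^ n * exp_subst p $ n - exp_subst p $ n) / 2"
  "fst (snd (onsager_embed (p, lrefl p, q))) $ n = exp_subst q $ n + (exp_subst p $ n - (- 1) ^ n * exp_subst p $ n) / 2"
  "snd (snd (onsager_embed (p, lrefl p, q))) $ n = (exp_subst p $ n + (- 1) ^ n * exp_subst p $ n) / 2"
  by (simp_all add: onsager_embed_def loop_subst_def sl_twist_def exp_subst_lrefl_nth)

lemma exp_subst_nth_even_eq_0:
  assumes "lrefl q = - q" "even n"
  shows "exp_subst q $ n = 0"
proof -
  have "exp_subst (lrefl q) $ n = exp_subst q $ n"
    using assms(2) by (simp add: exp_subst_lrefl_nth)
  moreover have "exp_subst (lrefl q) $ n = - exp_subst q $ n"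
    using assms(1) by (simp add: exp_subst_uminus)
  ultimately show ?thesis by simp
qed

lemma onsager_embed_in_slLL:
  assumes "x \<in> OA"
  shows "onsager_embed x \<in> slLL"
proof -
  obtain p q where x: "x = (p, lrefl p, q)" "lrefl q = - q"
    using assms by (elim OAE)
  then show ?thesis
    by (auto simp: slLL_iff_nth onsager_embed_nth exp_subst_nth_even_eq_0)
qed

lemma fps_X_power_dvd_exp_subst_lrefl_iff:
  "fps_X ^ L dvd exp_subst (lrefl p) \<longleftrightarrow> fps_X ^ L dvd exp_subst p"
  by (simp add: fps_X_power_dvd_iff exp_subst_lrefl_nth)

lemma OA_ideal_iff: "x \<in> OA_ideal L \<longleftrightarrow> x \<in> OA \<and> onsager_embed x \<in> sl_lambda_pow L"
proof (cases "x \<in> OA")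
  case True
  then obtain p q where x: "x = (p, lrefl p, q)" "p \<in> LP" "q \<in> LP"
    by (elim OAE)
  have "x \<in> OA_ideal L \<longleftrightarrow> p \<in> tm1_ideal L \<and> q \<in> tm1_ideal L"
    using True unfolding x OA_ideal_def by auto
  also have "\<dots> \<longleftrightarrow> loop_subst x \<in> sl_lambda_pow L"
    using x by (simp add: tm1_ideal_iff_fps_X_power_dvd loop_subst_def sl_lambda_pow_def
        fps_X_power_dvd_exp_subst_lrefl_iff)
  finally show ?thesis
    using True by (simp add: onsager_embed_def sl_twist_mem_sl_lambda_pow_iff)
next
  case False
  then show ?thesis by (auto simp: OA_ideal_def)
qed

lemma exp_subst_odd_jet_surj:
  assumes "fps_parity False F"
  obtains q where "q \<in> LP" "lrefl q = - q" "fps_X ^ L dvd exp_subst q - F"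
proof -
  obtain q0 where q0: "q0 \<in> LP" "fps_X ^ L dvd exp_subst q0 - F"
    using exp_subst_jet_surj by blast
  define q where "q = lscale (1/2) (q0 - lrefl q0)"
  have "q \<in> LP"
    unfolding q_def by (intro LP_lscale LP_diff LP_lrefl q0(1))
  moreover have "lrefl q = - q"
    unfolding q_def by (simp add: lrefl_lscale lrefl_diff flip: lscale_uminus)
  moreover have "fps_X ^ L dvd exp_subst q - F"
    unfolding fps_X_power_dvd_iff
  proof (intro allI impI)
    fix n assume "n < L"
    then have "exp_subst q0 $ n = F $ n"
      using q0(2) unfolding fps_X_power_dvd_iff by simp
    moreover have "exp_subst q $ n = (exp_subst q0 $ n - (- 1) ^ n * exp_subst q0 $ n) / 2"
      unfolding q_def by (simp add: exp_subst_lscale LP_diff LP_lrefl q0(1) exp_subst_diff exp_subst_lrefl_nth)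
    moreover have "F $ n = 0" if "even n"
      using assms that unfolding fps_parity_def by auto
    ultimately show "(exp_subst q - F) $ n = 0"
      by (cases "even n") simp_all
  qed
  ultimately show ?thesis by (rule that)
qed

lemma onsager_embed_dense:
  assumes "s \<in> slLL"
  obtains x where "x \<in> OA" "onsager_embed x - s \<in> sl_lambda_pow L"
proof -
  obtain a b d where s: "s = (a, b, d)"
    by (cases s) auto
  have parity: "fps_parity False a" "fps_parity False b" "fps_parity True d"
    using assms unfolding s slLL_iff_parity by auto
  obtain p where p: "p \<in> LP" "fps_X ^ L dvd exp_subst p - (d + fps_const (1/2) * (b - a))"
    using exp_subst_jet_surj by blast
  have "fps_parity False (fps_const (1/2) * (a + b))"
    using parity by (intro fps_parity_const_mult fps_parity_add)
  then obtain q where q: "q \<in> LP" "lrefl q = - q" "fps_X ^ L dvd exp_subst q - fps_const (1/2) * (a + b)"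
    by (rule exp_subst_odd_jet_surj)
  have x: "(p, lrefl p, q) \<in> OA"
    using p(1) q(1,2) unfolding OA_def by blast
  have "onsager_embed (p, lrefl p, q) - s \<in> sl_lambda_pow L"
    unfolding sl_lambda_pow_iff_nth s
  proof (intro allI impI)
    fix n assume "n < L"
    then have jets: "exp_subst p $ n = d $ n + (b $ n - a $ n) / 2" "exp_subst q $ n = (a $ n + b $ n) / 2"
      using p(2) q(3) unfolding fps_X_power_dvd_iff by auto
    consider "even n" "a $ n = 0" "b $ n = 0" | "odd n" "d $ n = 0"
      using parity unfolding fps_parity_def by blast
    then show "fst (onsager_embed (p, lrefl p, q) - (a, b, d)) $ n = 0 \<and>
        fst (snd (onsager_embed (p, lrefl p, q) - (a, b, d))) $ n = 0 \<and>
        snd (snd (onsager_embed (p, lrefl p, q) - (a, b, d))) $ n = 0"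
      by cases (simp_all add: onsager_embed_nth jets field_simps)
  qed
  with x show ?thesis by (rule that)
qed

section \<open>Cosets and induced operations\<close>

lemma mem_coset_iff: "w \<in> coset A I x \<longleftrightarrow> w \<in> A \<and> w - x \<in> I"
  by (simp add: coset_def)

lemma coset_in_quot: "x \<in> A \<Longrightarrow> coset A I x \<in> quot A I"
  by (simp add: quot_def)

lemma quotE:
  assumes "C \<in> quot A I"
  obtains x where "x \<in> A" "C = coset A I x"
  using assms unfolding quot_def by blast

lemma qop1_eq_qop2: "qop1 A I g C = qop2 A I (\<lambda>x _. g x) C C"
  by (auto simp: qop1_def qop2_def)

locale additive_subgroup =
  fixes A :: "'a::ab_group_add set" and I :: "'a set"
  assumes subset: "I \<subseteq> A"
    and zero_mem: "0 \<in> I"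
    and diff_mem: "u \<in> I \<Longrightarrow> v \<in> I \<Longrightarrow> u - v \<in> I"
begin

lemma add_mem: "u \<in> I \<Longrightarrow> v \<in> I \<Longrightarrow> u + v \<in> I"
  using diff_mem[of u "- v"] diff_mem[OF zero_mem, of v] by simp

lemma diff_mem_trans: "u - v \<in> I \<Longrightarrow> v - w \<in> I \<Longrightarrow> u - w \<in> I"
  using add_mem[of "u - v" "v - w"] by simp

lemma diff_mem_commute: "u - v \<in> I \<Longrightarrow> v - u \<in> I"
  using diff_mem[OF zero_mem, of "u - v"] by simp

lemma coset_self: "x \<in> A \<Longrightarrow> x \<in> coset A I x"
  by (simp add: mem_coset_iff zero_mem)

lemma coset_eq_iff: "x \<in> A \<Longrightarrow> coset A I x = coset A I y \<longleftrightarrow> x - y \<in> I"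
  unfolding coset_def set_eq_iff
  by (metis (no_types, lifting) diff_mem_trans diff_mem_commute mem_Collect_eq diff_self zero_mem)

lemma coset_eqI: "x - y \<in> I \<Longrightarrow> coset A I x = coset A I y"
  unfolding coset_def by (metis diff_mem_trans diff_mem_commute)

lemma quot_eq_coset: "C \<in> quot A I \<Longrightarrow> w \<in> C \<Longrightarrow> C = coset A I w"
  by (elim quotE) (simp add: mem_coset_iff coset_eqI diff_mem_commute)

lemma quot_nonempty: "C \<in> quot A I \<Longrightarrow> \<exists>w. w \<in> C"
  by (elim quotE) (use coset_self in blast)

lemma qop2_coset:
  assumes "x \<in> A" "y \<in> A" "f x y \<in> A"
    and congruent: "\<And>x x' y y'. x \<in> A \<Longrightarrow> x' \<in> A \<Longrightarrow> y \<in> A \<Longrightarrow> y' \<in> A \<Longrightarrow>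
      x - x' \<in> I \<Longrightarrow> y - y' \<in> I \<Longrightarrow> f x y - f x' y' \<in> I"
  shows "qop2 A I f (coset A I x) (coset A I y) = coset A I (f x y)"
proof (intro set_eqI iffI)
  fix w assume "w \<in> qop2 A I f (coset A I x) (coset A I y)"
  then obtain x' y' where "w \<in> A" "x' \<in> coset A I x" "y' \<in> coset A I y" "w - f x' y' \<in> I"
    unfolding qop2_def by blast
  then show "w \<in> coset A I (f x y)"
    using congruent[of x' x y' y] assms(1,2) by (auto simp: mem_coset_iff intro: diff_mem_trans)
next
  fix w assume "w \<in> coset A I (f x y)"
  then show "w \<in> qop2 A I f (coset A I x) (coset A I y)"
    using coset_self[OF assms(1)] coset_self[OF assms(2)] unfolding qop2_def Bex_def mem_coset_iff by blast
qed

end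

section \<open>The completion and the quotients\<close>

interpretation OA_ideal: additive_subgroup OA "OA_ideal L" for L
proof
  show "OA_ideal L \<subseteq> OA"
    by (auto simp: OA_ideal_iff)
  show "0 \<in> OA_ideal L"
    by (simp add: OA_ideal_iff OA_zero onsager_embed_zero sl_lambda_pow_zero)
  show "u - v \<in> OA_ideal L" if "u \<in> OA_ideal L" "v \<in> OA_ideal L" for u v
    using that by (simp add: OA_ideal_iff OA_diff onsager_embed_diff sl_lambda_pow_diff)
qed

interpretation slLL_filt: additive_subgroup slLL "slLL_filt L" for L
proof
  show "slLL_filt L \<subseteq> slLL"
    by (auto simp: slLL_filt_eq)
  show "0 \<in> slLL_filt L"
    by (simp add: slLL_filt_eq slLL_zero sl_lambda_pow_zero)
  show "u - v \<in> slLL_filt L" if "u \<in> slLL_filt L" "v \<in> slLL_filt L" for u v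
    using that by (simp add: slLL_filt_eq slLL_diff sl_lambda_pow_diff)
qed

lemma OA_ideal_antimono:
  assumes "K \<le> L"
  shows "OA_ideal L \<subseteq> OA_ideal K"
  using sl_lambda_pow_antimono[OF assms] by (auto simp: OA_ideal_iff)

lemma diff_mem_OA_ideal_iff:
  "x \<in> OA \<Longrightarrow> y \<in> OA \<Longrightarrow> x - y \<in> OA_ideal L \<longleftrightarrow> onsager_embed x - onsager_embed y \<in> sl_lambda_pow L"
  by (simp add: OA_ideal_iff OA_diff onsager_embed_diff)

lemma diff_mem_slLL_filt_iff:
  "u \<in> slLL \<Longrightarrow> v \<in> slLL \<Longrightarrow> u - v \<in> slLL_filt L \<longleftrightarrow> u - v \<in> sl_lambda_pow L"
  by (simp add: slLL_filt_eq slLL_diff)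

lemma coset_OA_eq_iff:
  "x \<in> OA \<Longrightarrow> y \<in> OA \<Longrightarrow>
    coset OA (OA_ideal L) x = coset OA (OA_ideal L) y \<longleftrightarrow> onsager_embed x - onsager_embed y \<in> sl_lambda_pow L"
  by (simp add: OA_ideal.coset_eq_iff diff_mem_OA_ideal_iff)

lemma coset_slLL_eq_iff:
  "u \<in> slLL \<Longrightarrow> v \<in> slLL \<Longrightarrow>
    coset slLL (slLL_filt L) u = coset slLL (slLL_filt L) v \<longleftrightarrow> u - v \<in> sl_lambda_pow L"
  by (simp add: slLL_filt.coset_eq_iff diff_mem_slLL_filt_iff)

lemma OA_proj_coset:
  assumes "K \<le> L" "x \<in> OA"
  shows "OA_proj K (coset OA (OA_ideal L) x) = coset OA (OA_ideal K) x"
proof (intro set_eqI iffI)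
  fix y assume "y \<in> OA_proj K (coset OA (OA_ideal L) x)"
  then obtain x' where "y \<in> OA" "x' - x \<in> OA_ideal L" "y - x' \<in> OA_ideal K"
    unfolding OA_proj_def by (auto simp: mem_coset_iff)
  then show "y \<in> coset OA (OA_ideal K) x"
    using OA_ideal_antimono[OF assms(1)] by (auto simp: mem_coset_iff intro: OA_ideal.diff_mem_trans)
next
  fix y assume "y \<in> coset OA (OA_ideal K) x"
  then show "y \<in> OA_proj K (coset OA (OA_ideal L) x)"
    unfolding OA_proj_def using OA_ideal.coset_self[OF assms(2)] by (auto simp: mem_coset_iff)
qed

lemma OAhat_component_in_quot: "X \<in> OAhat \<Longrightarrow> X L \<in> quot OA (OA_ideal L)"
  by (simp add: OAhat_def OA_quot_def)

lemma OAhat_component_nonempty: "X \<in> OAhat \<Longrightarrow> \<exists>x. x \<in> X L"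
  using OAhat_component_in_quot OA_ideal.quot_nonempty by blast

lemma OAhat_component_eq_coset: "X \<in> OAhat \<Longrightarrow> x \<in> X L \<Longrightarrow> X L = coset OA (OA_ideal L) x"
  using OAhat_component_in_quot OA_ideal.quot_eq_coset by blast

lemma OAhat_component_mem_OA: "X \<in> OAhat \<Longrightarrow> x \<in> X L \<Longrightarrow> x \<in> OA"
  using OAhat_component_eq_coset by (metis mem_coset_iff)

lemma OAhat_embed_cauchy:
  assumes "X \<in> OAhat" "K \<le> L" "x \<in> X L" "y \<in> X K"
  shows "onsager_embed x - onsager_embed y \<in> sl_lambda_pow K"
proof -
  have x: "x \<in> OA"
    using OAhat_component_mem_OA assms(1,3) .
  have "X K = OA_proj K (X L)"
    using assms(1,2) unfolding OAhat_def by auto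
  also have "\<dots> = coset OA (OA_ideal K) x"
    using OAhat_component_eq_coset[OF assms(1,3)] OA_proj_coset[OF assms(2) x] by simp
  finally have "y - x \<in> OA_ideal K"
    using assms(4) by (simp add: mem_coset_iff)
  then have "x - y \<in> OA_ideal K"
    by (rule OA_ideal.diff_mem_commute)
  then show ?thesis
    using x OAhat_component_mem_OA[OF assms(1,4)] by (simp add: diff_mem_OA_ideal_iff)
qed

definition OAhat_to_slLL :: "(nat \<Rightarrow> loop set) \<Rightarrow> sl" where
  "OAhat_to_slLL X = (THE s. \<forall>L. \<forall>x\<in>X L. onsager_embed x - s \<in> sl_lambda_pow L)"

lemma OAhat_to_slLL_eqI:
  assumes "\<And>L. \<exists>x. x \<in> X L" "\<And>L x. x \<in> X L \<Longrightarrow> onsager_embed x - s \<in> sl_lambda_pow L"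
  shows "OAhat_to_slLL X = s"
  unfolding OAhat_to_slLL_def
proof (rule the_equality)
  show "\<forall>L. \<forall>x\<in>X L. onsager_embed x - s \<in> sl_lambda_pow L"
    using assms(2) by blast
next
  fix s' assume s': "\<forall>L. \<forall>x\<in>X L. onsager_embed x - s' \<in> sl_lambda_pow L"
  have "s - s' \<in> sl_lambda_pow L" for L
  proof -
    obtain x where x: "x \<in> X L" using assms(1) by blast
    have "onsager_embed x - s' \<in> sl_lambda_pow L" "onsager_embed x - s \<in> sl_lambda_pow L"
      using assms(2) s' x by auto
    from sl_lambda_pow_diff[OF this] show ?thesis by simp
  qed
  then show "s' = s"
    using sl_eq_0_if_all_sl_lambda_pow[of "s - s'"] by simp
qed

lemma OAhat_limit_exists:
  assumes X: "X \<in> OAhat"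
  obtains s where "s \<in> slLL" "\<And>L x. x \<in> X L \<Longrightarrow> onsager_embed x - s \<in> sl_lambda_pow L"
proof -
  obtain xs where xs: "\<And>L. xs L \<in> X L"
    using OAhat_component_nonempty[OF X] by metis
  obtain s where s: "\<And>L. onsager_embed (xs L) - s \<in> sl_lambda_pow L"
    using sl_lambda_pow_limit[of "\<lambda>L. onsager_embed (xs L)", OF OAhat_embed_cauchy[OF X _ xs xs]] by blast
  have "onsager_embed x - s \<in> sl_lambda_pow L" if "x \<in> X L" for x L
    using sl_lambda_pow_add[OF OAhat_embed_cauchy[OF X order.refl that xs] s] by simp
  moreover have "s \<in> slLL"
  proof (rule slLL_closed)
    show "\<exists>v\<in>slLL. v - s \<in> sl_lambda_pow L" for L
      using s onsager_embed_in_slLL OAhat_component_mem_OA[OF X xs] by blast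
  qed
  ultimately show ?thesis using that by blast
qed

lemma OAhat_to_slLL_limit:
  assumes "X \<in> OAhat"
  shows "OAhat_to_slLL X \<in> slLL" "x \<in> X L \<Longrightarrow> onsager_embed x - OAhat_to_slLL X \<in> sl_lambda_pow L"
proof -
  obtain s where "s \<in> slLL" "\<And>L x. x \<in> X L \<Longrightarrow> onsager_embed x - s \<in> sl_lambda_pow L"
    using OAhat_limit_exists[OF assms] by blast
  moreover from this have "OAhat_to_slLL X = s"
    using OAhat_component_nonempty[OF assms] by (intro OAhat_to_slLL_eqI)
  ultimately show "OAhat_to_slLL X \<in> slLL" "x \<in> X L \<Longrightarrow> onsager_embed x - OAhat_to_slLL X \<in> sl_lambda_pow L"
    by auto
qed

definition OA_quot_to_slLL_quot :: "nat \<Rightarrow> loop set \<Rightarrow> sl set" where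
  "OA_quot_to_slLL_quot L C = coset slLL (slLL_filt L) (onsager_embed (SOME x. x \<in> C))"

lemma OA_quot_to_slLL_quot_coset:
  assumes "x \<in> OA"
  shows "OA_quot_to_slLL_quot L (coset OA (OA_ideal L) x) = coset slLL (slLL_filt L) (onsager_embed x)"
proof -
  define y where "y = (SOME y. y \<in> coset OA (OA_ideal L) x)"
  have "y \<in> coset OA (OA_ideal L) x"
    unfolding y_def using OA_ideal.coset_self[OF assms] by (rule someI)
  then have "y \<in> OA" "coset OA (OA_ideal L) y = coset OA (OA_ideal L) x"
    using OA_ideal.coset_eqI by (auto simp: mem_coset_iff)
  then show ?thesis
    unfolding OA_quot_to_slLL_quot_def y_def[symmetric]
    using assms by (simp add: coset_OA_eq_iff coset_slLL_eq_iff onsager_embed_in_slLL)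
qed

lemma OA_quot_to_slLL_quot_psi:
  assumes "X \<in> OAhat"
  shows "OA_quot_to_slLL_quot L (psi L X) = coset slLL (slLL_filt L) (OAhat_to_slLL X)"
proof -
  obtain x where x: "x \<in> X L"
    using OAhat_component_nonempty[OF assms] by blast
  then have "x \<in> OA"
    using OAhat_component_mem_OA[OF assms] by blast
  then show ?thesis
    unfolding psi_def OAhat_component_eq_coset[OF assms x]
    using OAhat_to_slLL_limit[OF assms] x
    by (simp add: OA_quot_to_slLL_quot_coset coset_slLL_eq_iff onsager_embed_in_slLL)
qed

lemma OA_quot_to_slLL_quot_bij:
  "bij_betw (OA_quot_to_slLL_quot L) (OA_quot L) (quot slLL (slLL_filt L))"
proof (rule bij_betw_imageI)
  show "inj_on (OA_quot_to_slLL_quot L) (OA_quot L)"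
  proof (rule inj_onI)
    fix C D assume "C \<in> OA_quot L" "D \<in> OA_quot L"
      and eq: "OA_quot_to_slLL_quot L C = OA_quot_to_slLL_quot L D"
    then obtain x y where "x \<in> OA" "C = coset OA (OA_ideal L) x" "y \<in> OA" "D = coset OA (OA_ideal L) y"
      unfolding OA_quot_def by (meson quotE)
    then show "C = D"
      using eq by (simp add: OA_quot_to_slLL_quot_coset coset_slLL_eq_iff coset_OA_eq_iff onsager_embed_in_slLL)
  qed
  show "OA_quot_to_slLL_quot L ` OA_quot L = quot slLL (slLL_filt L)"
  proof (intro set_eqI iffI)
    fix C' assume "C' \<in> OA_quot_to_slLL_quot L ` OA_quot L"
    then obtain x where "x \<in> OA" "C' = OA_quot_to_slLL_quot L (coset OA (OA_ideal L) x)"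
      unfolding OA_quot_def by (auto elim: quotE)
    then show "C' \<in> quot slLL (slLL_filt L)"
      by (simp add: OA_quot_to_slLL_quot_coset coset_in_quot onsager_embed_in_slLL)
  next
    fix C' assume "C' \<in> quot slLL (slLL_filt L)"
    then obtain s where s: "s \<in> slLL" "C' = coset slLL (slLL_filt L) s"
      by (elim quotE)
    obtain x where x: "x \<in> OA" "onsager_embed x - s \<in> sl_lambda_pow L"
      using onsager_embed_dense[OF s(1)] by blast
    then have "OA_quot_to_slLL_quot L (coset OA (OA_ideal L) x) = C'"
      using s by (simp add: OA_quot_to_slLL_quot_coset coset_slLL_eq_iff onsager_embed_in_slLL)
    then show "C' \<in> OA_quot_to_slLL_quot L ` OA_quot L"
      using x(1) unfolding OA_quot_def by (blast intro: coset_in_quot)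
  qed
qed

text \<open>Besides addition and the bracket, this also covers scalar multiplication, viewed as a binary
  operation ignoring its second argument (\<open>qop1_eq_qop2\<close>).\<close>

locale embedded_operation =
  fixes op :: "loop \<Rightarrow> loop \<Rightarrow> loop" and op' :: "sl \<Rightarrow> sl \<Rightarrow> sl"
  assumes OA_closed: "x \<in> OA \<Longrightarrow> y \<in> OA \<Longrightarrow> op x y \<in> OA"
    and slLL_closed: "u \<in> slLL \<Longrightarrow> v \<in> slLL \<Longrightarrow> op' u v \<in> slLL"
    and onsager_embed_hom:
      "x \<in> OA \<Longrightarrow> y \<in> OA \<Longrightarrow> onsager_embed (op x y) = op' (onsager_embed x) (onsager_embed y)"
    and congruent:
      "u - u' \<in> sl_lambda_pow L \<Longrightarrow> v - v' \<in> sl_lambda_pow L \<Longrightarrow> op' u v - op' u' v' \<in> sl_lambda_pow L"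
begin

lemma qop2_OA_coset:
  assumes "x \<in> OA" "y \<in> OA"
  shows "qop2 OA (OA_ideal L) op (coset OA (OA_ideal L) x) (coset OA (OA_ideal L) y)
    = coset OA (OA_ideal L) (op x y)"
  using assms by (intro OA_ideal.qop2_coset) (simp_all add: OA_closed diff_mem_OA_ideal_iff onsager_embed_hom congruent)

lemma qop2_slLL_coset:
  assumes "u \<in> slLL" "v \<in> slLL"
  shows "qop2 slLL (slLL_filt L) op' (coset slLL (slLL_filt L) u) (coset slLL (slLL_filt L) v)
    = coset slLL (slLL_filt L) (op' u v)"
  using assms by (intro slLL_filt.qop2_coset) (simp_all add: slLL_closed diff_mem_slLL_filt_iff congruent)

lemma OAhat_to_slLL_op:
  assumes X: "X \<in> OAhat" and Y: "Y \<in> OAhat"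
  shows "OAhat_to_slLL (\<lambda>L. qop2 OA (OA_ideal L) op (X L) (Y L)) = op' (OAhat_to_slLL X) (OAhat_to_slLL Y)"
proof -
  obtain xs ys where xy: "\<And>L. xs L \<in> X L" "\<And>L. ys L \<in> Y L"
    using OAhat_component_nonempty X Y by metis
  then have OA: "xs L \<in> OA" "ys L \<in> OA" for L
    using OAhat_component_mem_OA X Y by blast+
  have eq: "qop2 OA (OA_ideal L) op (X L) (Y L) = coset OA (OA_ideal L) (op (xs L) (ys L))" for L
    using OAhat_component_eq_coset[OF X xy(1)] OAhat_component_eq_coset[OF Y xy(2)] OA
    by (simp add: qop2_OA_coset)
  have approx: "op' (onsager_embed (xs L)) (onsager_embed (ys L)) - op' (OAhat_to_slLL X) (OAhat_to_slLL Y)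
      \<in> sl_lambda_pow L" for L
    using OAhat_to_slLL_limit(2)[OF X xy(1)] OAhat_to_slLL_limit(2)[OF Y xy(2)] by (rule congruent)
  show ?thesis
  proof (rule OAhat_to_slLL_eqI)
    show "\<exists>z. z \<in> qop2 OA (OA_ideal L) op (X L) (Y L)" for L
      unfolding eq using OA_ideal.coset_self OA_closed OA by blast
  next
    fix L z assume "z \<in> qop2 OA (OA_ideal L) op (X L) (Y L)"
    then have z: "z \<in> OA" "z - op (xs L) (ys L) \<in> OA_ideal L"
      by (simp_all add: eq mem_coset_iff)
    then have "onsager_embed z - onsager_embed (op (xs L) (ys L)) \<in> sl_lambda_pow L"
      using OA by (simp add: diff_mem_OA_ideal_iff OA_closed)
    then have "onsager_embed z - op' (onsager_embed (xs L)) (onsager_embed (ys L)) \<in> sl_lambda_pow L"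
      using OA by (simp add: onsager_embed_hom)
    from sl_lambda_pow_add[OF this approx]
    show "onsager_embed z - op' (OAhat_to_slLL X) (OAhat_to_slLL Y) \<in> sl_lambda_pow L"
      by simp
  qed
qed

lemma OA_quot_to_slLL_quot_op:
  assumes "C \<in> OA_quot L" "D \<in> OA_quot L"
  shows "OA_quot_to_slLL_quot L (qop2 OA (OA_ideal L) op C D)
    = qop2 slLL (slLL_filt L) op' (OA_quot_to_slLL_quot L C) (OA_quot_to_slLL_quot L D)"
proof -
  obtain x y where "x \<in> OA" "C = coset OA (OA_ideal L) x" "y \<in> OA" "D = coset OA (OA_ideal L) y"
    using assms unfolding OA_quot_def by (meson quotE)
  then show ?thesis
    by (simp add: qop2_OA_coset qop2_slLL_coset OA_quot_to_slLL_quot_coset OA_closed onsager_embed_in_slLL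
        onsager_embed_hom)
qed

end

interpretation add: embedded_operation "(+)" "(+)"
proof
  show "u + v - (u' + v') \<in> sl_lambda_pow L"
    if "u - u' \<in> sl_lambda_pow L" "v - v' \<in> sl_lambda_pow L" for u u' v v' L
    using sl_lambda_pow_add[OF that] by (simp add: algebra_simps)
qed (simp_all add: OA_add slLL_add onsager_embed_add)

interpretation scale: embedded_operation "\<lambda>x _. loop_scale c x" "\<lambda>u _. sl_scale c u" for c
proof
  show "sl_scale c u - sl_scale c u' \<in> sl_lambda_pow L" if "u - u' \<in> sl_lambda_pow L" for u u' L
    using sl_lambda_pow_scale[OF that] by (simp add: sl_scale_diff)
qed (simp_all add: OA_scale slLL_scale onsager_embed_scale)

interpretation br: embedded_operation loop_br sl_br
  by unfold_locales (simp_all add: OA_br slLL_br onsager_embed_br sl_br_congruent)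

lemma OAhat_to_slLL_inj: "inj_on OAhat_to_slLL OAhat"
proof (rule inj_onI)
  fix X Y assume X: "X \<in> OAhat" and Y: "Y \<in> OAhat" and eq: "OAhat_to_slLL X = OAhat_to_slLL Y"
  show "X = Y"
  proof
    fix L
    obtain x y where xy: "x \<in> X L" "y \<in> Y L"
      using OAhat_component_nonempty X Y by blast
    have "(onsager_embed x - OAhat_to_slLL X) - (onsager_embed y - OAhat_to_slLL Y) \<in> sl_lambda_pow L"
      using OAhat_to_slLL_limit(2) X Y xy by (blast intro: sl_lambda_pow_diff)
    then show "X L = Y L"
      using eq OAhat_component_mem_OA[OF X xy(1)] OAhat_component_mem_OA[OF Y xy(2)]
      by (simp add: OAhat_component_eq_coset[OF X xy(1)] OAhat_component_eq_coset[OF Y xy(2)] coset_OA_eq_iff)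
  qed
qed

lemma OAhat_to_slLL_surj:
  assumes s: "s \<in> slLL"
  obtains X where "X \<in> OAhat" "OAhat_to_slLL X = s"
proof -
  have "\<exists>x. x \<in> OA \<and> onsager_embed x - s \<in> sl_lambda_pow L" for L
    using onsager_embed_dense[OF s] by blast
  then obtain xs where xs: "\<And>L. xs L \<in> OA" "\<And>L. onsager_embed (xs L) - s \<in> sl_lambda_pow L"
    by metis
  define X where "X L = coset OA (OA_ideal L) (xs L)" for L
  have "X \<in> OAhat"
    unfolding OAhat_def OA_quot_def
  proof (intro CollectI conjI allI impI)
    show "X L \<in> quot OA (OA_ideal L)" for L
      unfolding X_def using xs(1) by (rule coset_in_quot)
    fix L K :: nat assume "K \<le> L"
    then have "(onsager_embed (xs L) - s) - (onsager_embed (xs K) - s) \<in> sl_lambda_pow K"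
      using xs(2) sl_lambda_pow_antimono by (blast intro: sl_lambda_pow_diff)
    then show "OA_proj K (X L) = X K"
      unfolding X_def using \<open>K \<le> L\<close> xs(1) by (simp add: OA_proj_coset coset_OA_eq_iff)
  qed
  moreover have "OAhat_to_slLL X = s"
  proof (rule OAhat_to_slLL_eqI)
    show "\<exists>x. x \<in> X L" for L
      unfolding X_def using OA_ideal.coset_self xs(1) by blast
    fix L x assume "x \<in> X L"
    then have "x \<in> OA" "x - xs L \<in> OA_ideal L"
      unfolding X_def by (simp_all add: mem_coset_iff)
    then have "onsager_embed x - onsager_embed (xs L) \<in> sl_lambda_pow L"
      using xs(1) by (simp add: diff_mem_OA_ideal_iff)
    from sl_lambda_pow_add[OF this xs(2)] show "onsager_embed x - s \<in> sl_lambda_pow L"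
      by simp
  qed
  ultimately show ?thesis by (rule that)
qed

lemma OAhat_to_slLL_bij: "bij_betw OAhat_to_slLL OAhat slLL"
proof (rule bij_betw_imageI)
  show "inj_on OAhat_to_slLL OAhat"
    by (rule OAhat_to_slLL_inj)
  show "OAhat_to_slLL ` OAhat = slLL"
  proof (intro subset_antisym subsetI)
    fix s assume "s \<in> slLL"
    then obtain X where "X \<in> OAhat" "OAhat_to_slLL X = s"
      by (rule OAhat_to_slLL_surj)
    then show "s \<in> OAhat_to_slLL ` OAhat" by blast
  qed (use OAhat_to_slLL_limit(1) in blast)
qed

text \<open>By \<open>OA_quot_to_slLL_quot_psi\<close>, this reduces to the injectivity of \<open>OA_quot_to_slLL_quot L\<close>.\<close>

lemma OAhat_filt_iff:
  assumes "X \<in> OAhat"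
  shows "X \<in> OAhat_filt L \<longleftrightarrow> OAhat_to_slLL X \<in> slLL_filt L"
proof -
  have "X \<in> OAhat_filt L \<longleftrightarrow> psi L X = coset OA (OA_ideal L) 0"
    using assms by (simp add: OAhat_filt_def)
  also have "\<dots> \<longleftrightarrow> OA_quot_to_slLL_quot L (psi L X) = OA_quot_to_slLL_quot L (coset OA (OA_ideal L) 0)"
    using OAhat_component_in_quot[OF assms] coset_in_quot[OF OA_zero]
    by (intro inj_on_eq_iff[OF bij_betw_imp_inj_on[OF OA_quot_to_slLL_quot_bij], symmetric])
       (simp_all add: psi_def OA_quot_def)
  also have "\<dots> \<longleftrightarrow> OAhat_to_slLL X \<in> slLL_filt L"
    using OAhat_to_slLL_limit(1)[OF assms]
    by (simp add: OA_quot_to_slLL_quot_psi[OF assms] OA_quot_to_slLL_quot_coset OA_zero onsager_embed_zero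
        slLL_filt.coset_eq_iff)
  finally show ?thesis .
qed

lemma OAhat_to_slLL_filt: "OAhat_to_slLL ` OAhat_filt L = slLL_filt L"
proof (intro set_eqI iffI)
  fix s assume "s \<in> OAhat_to_slLL ` OAhat_filt L"
  then show "s \<in> slLL_filt L"
    using OAhat_filt_iff by (auto simp: OAhat_filt_def)
next
  fix s assume s: "s \<in> slLL_filt L"
  then obtain X where "X \<in> OAhat" "OAhat_to_slLL X = s"
    using OAhat_to_slLL_surj slLL_filt.subset by blast
  then show "s \<in> OAhat_to_slLL ` OAhat_filt L"
    using s OAhat_filt_iff by blast
qed

lemma is_lie_iso_OAhat_to_slLL:
  "is_lie_iso OAhat OAhat_add OAhat_scale OAhat_br slLL (+) sl_scale sl_br OAhat_to_slLL"
  unfolding is_lie_iso_def OAhat_add_def OAhat_scale_def OAhat_br_def OAq_add_def OAq_scale_def OAq_br_def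
    qop1_eq_qop2
  by (simp add: OAhat_to_slLL_bij add.OAhat_to_slLL_op scale.OAhat_to_slLL_op br.OAhat_to_slLL_op)

lemma is_lie_iso_OA_quot_to_slLL_quot:
  "is_lie_iso (OA_quot L) (OAq_add L) (OAq_scale L) (OAq_br L)
     (quot slLL (slLL_filt L)) (qop2 slLL (slLL_filt L) (+))
     (\<lambda>c. qop1 slLL (slLL_filt L) (sl_scale c)) (qop2 slLL (slLL_filt L) sl_br) (OA_quot_to_slLL_quot L)"
  unfolding is_lie_iso_def OAq_add_def OAq_scale_def OAq_br_def qop1_eq_qop2
  by (simp add: OA_quot_to_slLL_quot_bij add.OA_quot_to_slLL_quot_op scale.OA_quot_to_slLL_quot_op
      br.OA_quot_to_slLL_quot_op)

theorem theorem5: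
  shows "\<exists>\<Phi>.
    is_lie_iso OAhat OAhat_add OAhat_scale OAhat_br slLL (+) sl_scale sl_br \<Phi> \<and>
    (\<forall>L. \<Phi> ` OAhat_filt L = slLL_filt L) \<and>
    (\<forall>L. \<exists>\<Theta>.
       is_lie_iso (OA_quot L) (OAq_add L) (OAq_scale L) (OAq_br L)
         (quot slLL (slLL_filt L)) (qop2 slLL (slLL_filt L) (+))
         (\<lambda>c. qop1 slLL (slLL_filt L) (sl_scale c)) (qop2 slLL (slLL_filt L) sl_br) \<Theta> \<and>
       (\<forall>X\<in>OAhat. \<Theta> (psi L X) = coset slLL (slLL_filt L) (\<Phi> X)))"
  using is_lie_iso_OAhat_to_slLL OAhat_to_slLL_filt is_lie_iso_OA_quot_to_slLL_quot OA_quot_to_slLL_quot_psi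
  by blast

end
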